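(* Assume $\beta^2\le\frac43-\mu$ for a constant $\mu>0$. There is $a_0>0$ depending only on $S$ and $\mu$ such that for all $0<a\le\min(a_0,\lambda/2)$ there is a constant $c$ depending only on $a$ and $\mu$ with the following property. For every $t\ge0$, if $x^s_{3N/4}(t)>0$ and $$\mathbb E\left[\Phi(x^s(t+1))-\Phi(x^s(t))\,\middle|\,x^s(t)\right]\ge-\frac{1}{36}\frac aN\Phi(x^s(t)),$$ then either $\Phi(x^s(t))<\frac{3\mu}{32}\Psi(x^s(t))$ or $\Gamma(x^s(t))<cN$.
   Context: Weighted balls into weighted bins: $n$ bins with positive integer weights $N_1,\dots,N_n$, $N=\sum_iN_i$; $\mathcal D$ on $[n]$ is $(\alpha,\beta)$-biased, i.e. $\frac{N_i}{\alpha N}\le\Pr_{\mathcal D}[i]\le\frac{\beta N_i}{N}$, $\alpha,\beta\ge1$. Ball weights $w(t)$ are i.i.d. from $\mathcal W$ on $[0,\infty)$ with $\mathbb E[\mathcal W]=1$ and $M(z)=\mathbb E[e^{z\mathcal W}]$ finite at $z=\lambda$ for some $\lambda>0$; $S\ge1$ is a constant with $M''(z)\le2S$ for all $|z|<\lambda/2$. Each round two bins are sampled independently from $\mathcal D$ and the ball goes to the sampled bin with smaller value $v_i(t-1)=w_i(t-1)/N_i$. Slot formulation: bin $i$ consists of $N_i$ unit slots; the normalized slot vector $x^s(t)\in\mathbb R^N$ has, for each slot of bin $i$, the entry $v_i(t)-\frac1N\sum_{t'\le t}w(t')$, indexed so that $x^s_1(t)\ge\dots\ge x^s_N(t)$;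 fractional indices are rounded up. $\Phi(y)=\sum_je^{ay_j}$, $\Psi(y)=\sum_je^{-ay_j}$, $\Gamma=\Phi+\Psi$. *)

theory Defs
  imports "HOL-Probability.Probability"
begin

text \<open>Bins are indexed 0..n-1; bin i has positive integer weight Nw i (= N_i).
  A state is a load vector w (w i = w_i(t)); the total weight thrown so far is the sum of loads.\<close>

definition total_slots :: "nat \<Rightarrow> (nat \<Rightarrow> nat) \<Rightarrow> nat" where
  "total_slots n Nw = (\<Sum>i<n. Nw i)"

definition total_load :: "nat \<Rightarrow> (nat \<Rightarrow> real) \<Rightarrow> real" where
  "total_load n w = (\<Sum>i<n. w i)"

definition bin_value :: "(nat \<Rightarrow> nat) \<Rightarrow> (nat \<Rightarrow> real) \<Rightarrow> nat \<Rightarrow> real" where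
  "bin_value Nw w i = w i / real (Nw i)"

definition slot_vec :: "nat \<Rightarrow> (nat \<Rightarrow> nat) \<Rightarrow> (nat \<Rightarrow> real) \<Rightarrow> real list" where
  "slot_vec n Nw w = rev (sort (concat (map (\<lambda>i. replicate (Nw i)
      (bin_value Nw w i - total_load n w / real (total_slots n Nw))) [0..<n])))"

text \<open>1-based indexing of the sorted slot vector.\<close>
definition slot_entry :: "real list \<Rightarrow> nat \<Rightarrow> real" where
  "slot_entry xs k = xs ! (k - 1)"

definition Phi :: "real \<Rightarrow> real list \<Rightarrow> real" where
  "Phi a ys = sum_list (map (\<lambda>y. exp (a * y)) ys)"

definition Psi :: "real \<Rightarrow> real list \<Rightarrow> real" where
  "Psi a ys = sum_list (map (\<lambda>y. exp (- a * y)) ys)"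

definition Gamma :: "real \<Rightarrow> real list \<Rightarrow> real" where
  "Gamma a ys = Phi a ys + Psi a ys"

definition biased :: "nat \<Rightarrow> (nat \<Rightarrow> nat) \<Rightarrow> nat pmf \<Rightarrow> real \<Rightarrow> real \<Rightarrow> bool" where
  "biased n Nw D \<alpha> \<beta> \<longleftrightarrow> set_pmf D \<subseteq> {..<n} \<and>
     (\<forall>i<n. real (Nw i) / (\<alpha> * real (total_slots n Nw)) \<le> pmf D i \<and>
            pmf D i \<le> \<beta> * real (Nw i) / real (total_slots n Nw))"

definition allocate :: "(nat \<Rightarrow> nat) \<Rightarrow> (nat \<Rightarrow> real) \<Rightarrow> nat \<Rightarrow> nat \<Rightarrow> nat" where
  "allocate Nw w i j = (if bin_value Nw w i \<le> bin_value Nw w j then i else j)"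

definition add_ball :: "(nat \<Rightarrow> real) \<Rightarrow> nat \<Rightarrow> real \<Rightarrow> (nat \<Rightarrow> real)" where
  "add_ball w k \<omega> = w(k := w k + \<omega>)"

definition mgf :: "real measure \<Rightarrow> real \<Rightarrow> real" where
  "mgf Wd z = (\<integral>\<omega>. exp (z * \<omega>) \<partial>Wd)"

text \<open>E[ Phi(x^s(t+1)) - Phi(x^s(t)) | state at time t = w ].\<close>
definition Phi_drift :: "real \<Rightarrow> nat \<Rightarrow> (nat \<Rightarrow> nat) \<Rightarrow> nat pmf \<Rightarrow> real measure
     \<Rightarrow> (nat \<Rightarrow> real) \<Rightarrow> real" where
  "Phi_drift a n Nw D Wd w =
     (\<Sum>i<n. \<Sum>j<n. pmf D i * pmf D j *
        (\<integral>\<omega>. Phi a (slot_vec n Nw (add_ball w (allocate Nw w i j) \<omega>))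
              - Phi a (slot_vec n Nw w) \<partial>Wd))"

end

theory Submission
  imports Defs
begin

text \<open>
  Let \<open>z\<close> be the median slot value; it is positive because the top three quarters of the slots
  are. The bounds \<open>M(\<plusminus>h) \<le> 1 \<plusminus> h + S h\<^sup>2\<close> on the moment generating function show that a ball
  thrown into bin \<open>k\<close> changes \<open>\<Phi>\<close> in expectation by at most
  \<open>- (a/N) (1 - S a) \<Phi> + a (1 + S a) exp (a y\<^sub>k)\<close>. With two choices the ball lands above level
  \<open>z\<close> only if both samples are above \<open>z\<close>, and at most \<open>N/2\<close> slots are; so the expected drift is at
  most \<open>- (a/N) (1 - S a) \<Phi> + a (1 + S a) (exp (a z) + (\<beta>\<^sup>2/2) G / N)\<close>, where \<open>G\<close> is the part
  of \<open>\<Phi>\<close> above the level \<open>exp (a z)\<close>. As \<open>\<Phi> \<ge> G + (N/2) exp (a z)\<close> and \<open>\<beta>\<^sup>2 \<le> 4/3\<close>, a drift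
  of at least \<open>- (a / 36 N) \<Phi>\<close> forces \<open>\<Phi> = O(N exp (a z))\<close>.
  On the other hand the entries sum to zero and the top half of them are at least \<open>z\<close>, so the
  bottom quarter has mean at most \<open>-2z\<close> and Jensen's inequality gives \<open>\<Psi> \<ge> (N/8) exp (2 a z)\<close>.
  Hence, unless \<open>\<Phi> < (3\<mu>/32) \<Psi>\<close>, \<open>exp (a z) = O(1/\<mu>)\<close> and so \<open>\<Gamma> = O(N)\<close>.
\<close>

section \<open>Exponential moments of the ball weight\<close>

lemma power_le_nat_power_mult_exp:
  fixes x :: real
  assumes "x \<ge> 0"
  shows "x ^ j \<le> real j ^ j * exp x"
proof (cases "j = 0")
  case False
  have "(x / real j) ^ j \<le> (1 + x / real j) ^ j"
    using assms by (intro power_mono) auto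
  also have "\<dots> \<le> exp x"
    using False assms by (intro exp_ge_one_plus_x_over_n_power_n) auto
  finally show ?thesis
    using False by (simp add: field_simps)
qed (use assms in simp)

lemma abs_exp_minus_one_minus_le:
  fixes x :: real
  shows "\<bar>exp x - 1 - x\<bar> \<le> x\<^sup>2 * exp \<bar>x\<bar> / 2"
proof -
  obtain t where t: "\<bar>t\<bar> \<le> \<bar>x\<bar>"
    and taylor: "exp x = (\<Sum>m<2. x ^ m / fact m) + exp t / fact 2 * x\<^sup>2"
    using Maclaurin_exp_le[of x 2] by blast
  have "\<bar>exp x - 1 - x\<bar> = exp t * x\<^sup>2 / 2"
    using taylor by (simp add: numeral_2_eq_2)
  also have "\<dots> \<le> exp \<bar>x\<bar> * x\<^sup>2 / 2"
    using t by (intro divide_right_mono mult_right_mono) auto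
  finally show ?thesis
    by (simp add: mult.commute)
qed

lemma abs_power_exp_taylor_le:
  fixes \<omega> z h d :: real
  assumes "\<omega> \<ge> 0" and "\<bar>h\<bar> \<le> d"
  shows "\<bar>\<omega> ^ j * exp ((z + h) * \<omega>) - \<omega> ^ j * exp (z * \<omega>) - h * (\<omega> ^ Suc j * exp (z * \<omega>))\<bar>
    \<le> h\<^sup>2 / 2 * (\<omega> ^ (j + 2) * exp ((z + d) * \<omega>))"
proof -
  have "\<bar>h * \<omega>\<bar> \<le> d * \<omega>"
    using assms by (simp add: abs_mult mult_right_mono)
  then have taylor: "\<bar>exp (h * \<omega>) - 1 - h * \<omega>\<bar> \<le> (h * \<omega>)\<^sup>2 * exp (d * \<omega>) / 2"
    using abs_exp_minus_one_minus_le[of "h * \<omega>"]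
    by (smt (verit) exp_le_cancel_iff mult_left_mono zero_le_power2 divide_right_mono)
  have "\<omega> ^ j * exp ((z + h) * \<omega>) - \<omega> ^ j * exp (z * \<omega>) - h * (\<omega> ^ Suc j * exp (z * \<omega>))
      = \<omega> ^ j * exp (z * \<omega>) * (exp (h * \<omega>) - 1 - h * \<omega>)"
    by (simp add: distrib_right exp_add algebra_simps)
  also have "\<bar>\<dots>\<bar> = \<omega> ^ j * exp (z * \<omega>) * \<bar>exp (h * \<omega>) - 1 - h * \<omega>\<bar>"
    using assms by (simp add: abs_mult)
  also have "\<dots> \<le> \<omega> ^ j * exp (z * \<omega>) * ((h * \<omega>)\<^sup>2 * exp (d * \<omega>) / 2)"
    using assms taylor by (intro mult_left_mono) auto
  also have "\<dots> = h\<^sup>2 / 2 * (\<omega> ^ (j + 2) * exp ((z + d) * \<omega>))"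
    by (simp add: distrib_right exp_add power_add power_mult_distrib power2_eq_square)
  finally show ?thesis .
qed

lemma has_real_derivative_quadratic_remainder:
  fixes f :: "real \<Rightarrow> real"
  assumes "d > 0"
    and remainder: "\<And>y. \<bar>y - z\<bar> < d \<Longrightarrow> \<bar>f y - f z - (y - z) * D\<bar> \<le> C * (y - z)\<^sup>2"
  shows "(f has_real_derivative D) (at z)"
proof -
  have "((\<lambda>y. (f y - f z) / (y - z) - D) \<longlongrightarrow> 0) (at z)"
  proof (rule Lim_null_comparison)
    show "((\<lambda>y. C * \<bar>y - z\<bar>) \<longlongrightarrow> 0) (at z)"
      by (intro tendsto_eq_intros) auto
    have "eventually (\<lambda>y. \<bar>y - z\<bar> < d \<and> y \<noteq> z) (at z)"
      using \<open>d > 0\<close> by (auto simp: eventually_at dist_real_def)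
    then show "eventually (\<lambda>y. norm ((f y - f z) / (y - z) - D) \<le> C * \<bar>y - z\<bar>) (at z)"
    proof eventually_elim
      case (elim y)
      then have "norm ((f y - f z) / (y - z) - D) = \<bar>f y - f z - (y - z) * D\<bar> / \<bar>y - z\<bar>"
        by (simp add: field_simps)
      also have "\<dots> \<le> C * (y - z)\<^sup>2 / \<bar>y - z\<bar>"
        using remainder[of y] elim by (intro divide_right_mono) auto
      also have "\<dots> = C * \<bar>y - z\<bar>"
        using elim by (metis abs_mult_self_eq abs_eq_0 right_minus_eq mult.assoc
            nonzero_mult_div_cancel_right power2_eq_square)
      finally show ?case .
    qed
  qed
  then show ?thesis
    by (simp add: has_field_derivative_iff LIM_zero_iff)
qed

locale exp_moment_distribution = prob_space Wd for Wd :: "real measure" +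
  fixes lam :: real
  assumes sets_Wd: "sets Wd = sets borel"
    and nonneg: "AE \<omega> in Wd. \<omega> \<ge> 0"
    and integrable_exp_lam: "integrable Wd (\<lambda>\<omega>. exp (lam * \<omega>))"
    and lam_pos: "lam > 0"
begin

lemma borel_measurable_Wd: "f \<in> borel_measurable borel \<Longrightarrow> f \<in> borel_measurable Wd"
  by (simp add: measurable_cong_sets[OF sets_Wd refl])

lemma integrable_power_exp:
  assumes "c < lam"
  shows "integrable Wd (\<lambda>\<omega>. \<omega> ^ j * exp (c * \<omega>))"
proof (rule Bochner_Integration.integrable_bound)
  define d where "d = lam - c"
  have "d > 0" using assms by (simp add: d_def)
  show "integrable Wd (\<lambda>\<omega>. real j ^ j / d ^ j * exp (lam * \<omega>))"
    using integrable_exp_lam by simp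
  show "(\<lambda>\<omega>. \<omega> ^ j * exp (c * \<omega>)) \<in> borel_measurable Wd"
    by (intro borel_measurable_Wd) measurable
  show "AE \<omega> in Wd. norm (\<omega> ^ j * exp (c * \<omega>)) \<le> norm (real j ^ j / d ^ j * exp (lam * \<omega>))"
    using nonneg
  proof eventually_elim
    case (elim \<omega>)
    have "(d * \<omega>) ^ j \<le> real j ^ j * exp (d * \<omega>)"
      using elim \<open>d > 0\<close> by (intro power_le_nat_power_mult_exp) auto
    then have "\<omega> ^ j \<le> real j ^ j / d ^ j * exp (d * \<omega>)"
      using \<open>d > 0\<close> by (simp add: power_mult_distrib field_simps)
    then have "\<omega> ^ j * exp (c * \<omega>) \<le> real j ^ j / d ^ j * exp (d * \<omega>) * exp (c * \<omega>)"
      by (rule mult_right_mono) simp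
    also have "\<dots> = real j ^ j / d ^ j * exp (lam * \<omega>)"
      by (simp add: d_def exp_add[symmetric] algebra_simps)
    finally show ?case
      using elim \<open>d > 0\<close> by (simp add: abs_mult)
  qed
qed

lemma integrable_exp:
  assumes "c \<le> lam"
  shows "integrable Wd (\<lambda>\<omega>. exp (c * \<omega>))"
proof (rule Bochner_Integration.integrable_bound)
  show "integrable Wd (\<lambda>\<omega>. 1 + exp (lam * \<omega>))"
    using integrable_exp_lam by simp
  show "(\<lambda>\<omega>. exp (c * \<omega>)) \<in> borel_measurable Wd"
    by (intro borel_measurable_Wd) measurable
  show "AE \<omega> in Wd. norm (exp (c * \<omega>)) \<le> norm (1 + exp (lam * \<omega>))"
    using nonneg
  proof eventually_elim
    case (elim \<omega>)
    then have "exp (c * \<omega>) \<le> exp (lam * \<omega>)"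
      using assms by (simp add: mult_right_mono)
    then show ?case
      by (smt (verit) exp_gt_zero real_norm_def)
  qed
qed

definition exp_moment :: "nat \<Rightarrow> real \<Rightarrow> real" where
  "exp_moment j z = (\<integral>\<omega>. \<omega> ^ j * exp (z * \<omega>) \<partial>Wd)"

lemma exp_moment_remainder:
  assumes "z + d < lam" and "\<bar>h\<bar> \<le> d"
  shows "\<bar>exp_moment j (z + h) - exp_moment j z - h * exp_moment (Suc j) z\<bar>
    \<le> exp_moment (j + 2) (z + d) / 2 * h\<^sup>2"
proof -
  have "z + h < lam" "z < lam"
    using assms by auto
  then have integrable: "integrable Wd (\<lambda>\<omega>. \<omega> ^ j * exp ((z + h) * \<omega>))"
      "integrable Wd (\<lambda>\<omega>. \<omega> ^ j * exp (z * \<omega>))"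
      "integrable Wd (\<lambda>\<omega>. \<omega> ^ Suc j * exp (z * \<omega>))"
      "integrable Wd (\<lambda>\<omega>. \<omega> ^ (j + 2) * exp ((z + d) * \<omega>))"
    using assms integrable_power_exp by blast+
  define f where "f \<omega> = \<omega> ^ j * exp ((z + h) * \<omega>) - \<omega> ^ j * exp (z * \<omega>)
    - h * (\<omega> ^ Suc j * exp (z * \<omega>))" for \<omega>
  have "exp_moment j (z + h) - exp_moment j z - h * exp_moment (Suc j) z = (\<integral>\<omega>. f \<omega> \<partial>Wd)"
    using integrable by (simp add: exp_moment_def f_def)
  also have "\<bar>\<dots>\<bar> \<le> (\<integral>\<omega>. \<bar>f \<omega>\<bar> \<partial>Wd)"
    by (rule integral_abs_bound)
  also have "\<dots> \<le> (\<integral>\<omega>. h\<^sup>2 / 2 * (\<omega> ^ (j + 2) * exp ((z + d) * \<omega>)) \<partial>Wd)"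
  proof (rule integral_mono_AE)
    show "integrable Wd (\<lambda>\<omega>. \<bar>f \<omega>\<bar>)"
      using integrable by (simp add: f_def)
    show "integrable Wd (\<lambda>\<omega>. h\<^sup>2 / 2 * (\<omega> ^ (j + 2) * exp ((z + d) * \<omega>)))"
      using integrable by simp
    show "AE \<omega> in Wd. \<bar>f \<omega>\<bar> \<le> h\<^sup>2 / 2 * (\<omega> ^ (j + 2) * exp ((z + d) * \<omega>))"
      using nonneg by eventually_elim (use abs_power_exp_taylor_le assms(2) in \<open>simp add: f_def\<close>)
  qed
  also have "\<dots> = exp_moment (j + 2) (z + d) / 2 * h\<^sup>2"
    by (simp add: exp_moment_def)
  finally show ?thesis .
qed

lemma exp_moment_has_derivative:
  assumes "z < lam"
  shows "(exp_moment j has_real_derivative exp_moment (Suc j) z) (at z)"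
proof -
  define d where "d = (lam - z) / 2"
  have "d > 0"
    using assms by (simp add: d_def)
  have "z + d < lam"
    using assms by (simp add: d_def field_simps)
  show ?thesis
  proof (rule has_real_derivative_quadratic_remainder)
    show "\<bar>exp_moment j y - exp_moment j z - (y - z) * exp_moment (Suc j) z\<bar>
        \<le> exp_moment (j + 2) (z + d) / 2 * (y - z)\<^sup>2" if "\<bar>y - z\<bar> < d" for y
      using exp_moment_remainder[OF \<open>z + d < lam\<close>, of "y - z" j] that by simp
  qed (fact \<open>d > 0\<close>)
qed

lemma mgf_eq_exp_moment: "mgf Wd = exp_moment 0"
  by (simp add: fun_eq_iff mgf_def exp_moment_def)

lemma deriv_mgf:
  assumes "z < lam"
  shows "deriv (mgf Wd) z = exp_moment 1 z"
  using exp_moment_has_derivative[OF assms, of 0] by (simp add: mgf_eq_exp_moment DERIV_imp_deriv)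

lemma deriv2_mgf:
  assumes "z < lam"
  shows "deriv (deriv (mgf Wd)) z = exp_moment 2 z"
proof (rule DERIV_imp_deriv)
  show "(deriv (mgf Wd) has_real_derivative exp_moment 2 z) (at z)"
  proof (rule has_field_derivative_transform_within_open[of "exp_moment 1" _ _ "{..<lam}"])
    show "(exp_moment 1 has_real_derivative exp_moment 2 z) (at z)"
      using exp_moment_has_derivative[OF assms, of 1] by (simp add: numeral_2_eq_2)
  qed (use assms deriv_mgf in auto)
qed

text \<open>Taylor expansion at 0, where \<open>M(0) = 1\<close> and \<open>M'(0) = E[W] = 1\<close>.\<close>

lemma mgf_le_quadratic:
  assumes M'': "\<forall>z. \<bar>z\<bar> < lam / 2 \<longrightarrow> deriv (deriv (mgf Wd)) z \<le> 2 * S"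
    and mean: "(\<integral>\<omega>. \<omega> \<partial>Wd) = 1"
    and h: "0 < h" "h \<le> lam / 2"
  shows "mgf Wd h \<le> 1 + h + S * h\<^sup>2" and "mgf Wd (- h) \<le> 1 - h + S * h\<^sup>2"
proof -
  have M0: "exp_moment 0 0 = 1" "exp_moment 1 0 = 1"
    using mean by (simp_all add: exp_moment_def prob_space)
  have bound: "exp_moment 2 t / fact 2 * h\<^sup>2 \<le> S * h\<^sup>2" if "\<bar>t\<bar> < lam / 2" for t
  proof -
    have "exp_moment 2 t \<le> 2 * S"
      using M'' that deriv2_mgf[of t] lam_pos by auto
    then have "exp_moment 2 t * h\<^sup>2 \<le> 2 * S * h\<^sup>2"
      by (rule mult_right_mono) simp
    then show ?thesis
      by simp
  qed
  have derivs: "(exp_moment m has_real_derivative exp_moment (Suc m) t) (at t)"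
    if "t \<le> lam / 2" for m t
    using exp_moment_has_derivative that lam_pos by simp
  obtain t where t: "0 < t" "t < h"
    and taylor: "exp_moment 0 h = (\<Sum>m<2. exp_moment m 0 / fact m * h ^ m) + exp_moment 2 t / fact 2 * h\<^sup>2"
    using Maclaurin[of h 2 exp_moment "exp_moment 0"] h derivs by auto
  have "exp_moment 2 t / fact 2 * h\<^sup>2 \<le> S * h\<^sup>2"
    using t h by (intro bound) auto
  then show "mgf Wd h \<le> 1 + h + S * h\<^sup>2"
    using taylor M0 by (simp add: mgf_eq_exp_moment numeral_2_eq_2)
  obtain t where t: "- h < t" "t < 0"
    and taylor: "exp_moment 0 (- h) = (\<Sum>m<2. exp_moment m 0 / fact m * (- h) ^ m) + exp_moment 2 t / fact 2 * (- h)\<^sup>2"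
    using Maclaurin_minus[of "- h" 2 exp_moment "exp_moment 0"] h derivs by auto
  have "exp_moment 2 t / fact 2 * h\<^sup>2 \<le> S * h\<^sup>2"
    using t h by (intro bound) auto
  then show "mgf Wd (- h) \<le> 1 - h + S * h\<^sup>2"
    using taylor M0 by (simp add: mgf_eq_exp_moment numeral_2_eq_2)
qed

end

section \<open>The slot vector\<close>

definition normalized_value :: "nat \<Rightarrow> (nat \<Rightarrow> nat) \<Rightarrow> (nat \<Rightarrow> real) \<Rightarrow> nat \<Rightarrow> real" where
  "normalized_value n Nw w i = bin_value Nw w i - total_load n w / real (total_slots n Nw)"

lemma sum_list_map_rev_sort:
  fixes f :: "'a::linorder \<Rightarrow> 'b::comm_monoid_add"
  shows "sum_list (map f (rev (sort xs))) = sum_list (map f xs)"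
  by (metis mset_map mset_rev mset_sort sum_mset_sum_list)

lemma sum_list_map_slot_vec:
  "sum_list (map f (slot_vec n Nw w)) = (\<Sum>i<n. real (Nw i) * f (normalized_value n Nw w i))"
proof -
  have "sum_list (map f (concat (map (\<lambda>i. replicate (Nw i) (y i)) [0..<m])))
      = (\<Sum>i<m. real (Nw i) * f (y i))" for y m
    by (induct m) (simp_all add: sum_list_replicate)
  then show ?thesis
    unfolding slot_vec_def sum_list_map_rev_sort normalized_value_def .
qed

lemma total_slots_pos:
  assumes "n > 0" and "\<forall>i<n. Nw i > 0"
  shows "total_slots n Nw > 0"
proof -
  have "0 < Nw 0" "Nw 0 \<le> (\<Sum>i<n. Nw i)"
    using assms by (auto intro: member_le_sum)
  then show ?thesis
    by (simp add: total_slots_def)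
qed

lemma length_slot_vec: "length (slot_vec n Nw w) = total_slots n Nw"
  by (simp add: slot_vec_def total_slots_def length_concat comp_def sum_list_sum_nth lessThan_atLeast0)

lemma sorted_slot_vec: "sorted_wrt (\<ge>) (slot_vec n Nw w)"
  by (simp add: slot_vec_def sorted_wrt_rev)

lemma sum_list_slot_vec:
  assumes "\<forall>i<n. Nw i > 0" and "total_slots n Nw > 0"
  shows "sum_list (slot_vec n Nw w) = 0"
proof -
  let ?N = "real (total_slots n Nw)"
  have "sum_list (slot_vec n Nw w) = (\<Sum>i<n. real (Nw i) * normalized_value n Nw w i)"
    using sum_list_map_slot_vec[of "\<lambda>x. x"] by simp
  also have "\<dots> = (\<Sum>i<n. w i - real (Nw i) * (total_load n w / ?N))"
    using assms(1) by (intro sum.cong) (auto simp: normalized_value_def bin_value_def algebra_simps)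
  also have "\<dots> = total_load n w - ?N * (total_load n w / ?N)"
    by (simp only: sum_subtractf sum_distrib_right[symmetric] total_load_def total_slots_def of_nat_sum)
  finally show ?thesis
    using assms(2) by simp
qed

lemma normalized_value_add_ball:
  assumes "k < n"
  shows "normalized_value n Nw (add_ball w k \<omega>) i
    = normalized_value n Nw w i - \<omega> / real (total_slots n Nw) + (if i = k then \<omega> / real (Nw k) else 0)"
proof -
  have "total_load n (add_ball w k \<omega>) = total_load n w + \<omega>"
    using assms by (simp add: total_load_def add_ball_def sum.remove[of "{..<n}" k] algebra_simps)
  then show ?thesis
    by (auto simp: normalized_value_def bin_value_def add_ball_def add_divide_distrib diff_divide_distrib)
qed

lemma Phi_slot_vec_add_ball:
  assumes "k < n"
  shows "Phi a (slot_vec n Nw (add_ball w k \<omega>)) = exp (- (a / real (total_slots n Nw)) * \<omega>) *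
    (Phi a (slot_vec n Nw w)
      + real (Nw k) * exp (a * normalized_value n Nw w k) * (exp (a / real (Nw k) * \<omega>) - 1))"
proof -
  let ?y = "normalized_value n Nw w"
  let ?N = "real (total_slots n Nw)"
  let ?X = "real (Nw k) * exp (a * ?y k) * (exp (a / real (Nw k) * \<omega>) - 1)"
  have "Phi a (slot_vec n Nw (add_ball w k \<omega>))
      = (\<Sum>i<n. exp (- (a / ?N) * \<omega>) * (real (Nw i) * exp (a * ?y i) + (if i = k then ?X else 0)))"
    unfolding Phi_def sum_list_map_slot_vec
    by (intro sum.cong) (auto simp: normalized_value_add_ball[OF assms(1)]
        exp_add[symmetric] exp_diff algebra_simps)
  also have "\<dots> = exp (- (a / ?N) * \<omega>) * ((\<Sum>i<n. real (Nw i) * exp (a * ?y i)) + ?X)"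
    using assms(1) by (simp add: sum_distrib_left[symmetric] sum.distrib)
  finally show ?thesis
    by (simp add: Phi_def sum_list_map_slot_vec)
qed

section \<open>The one-step drift of the potential\<close>

text \<open>The factor \<open>exp (- a \<omega> / N) \<le> 1\<close> in front of the nonnegative growth of bin \<open>k\<close> is dropped.\<close>

lemma Phi_slot_vec_add_ball_le:
  assumes "k < n" and "a \<ge> 0" and "\<omega> \<ge> 0"
  shows "Phi a (slot_vec n Nw (add_ball w k \<omega>)) - Phi a (slot_vec n Nw w)
    \<le> (exp (- (a / real (total_slots n Nw)) * \<omega>) - 1) * Phi a (slot_vec n Nw w)
      + real (Nw k) * exp (a * normalized_value n Nw w k) * (exp (a / real (Nw k) * \<omega>) - 1)"
proof -
  define E where "E = exp (- (a / real (total_slots n Nw)) * \<omega>)"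
  define Y where "Y = real (Nw k) * exp (a * normalized_value n Nw w k) * (exp (a / real (Nw k) * \<omega>) - 1)"
  have "0 < E" "E \<le> 1" "0 \<le> Y"
    using assms by (auto simp: E_def Y_def)
  then have "E * (Phi a (slot_vec n Nw w) + Y) - Phi a (slot_vec n Nw w) \<le> (E - 1) * Phi a (slot_vec n Nw w) + Y"
    using mult_left_le_one_le[of Y E] by (simp add: algebra_simps)
  then show ?thesis
    by (simp only: Phi_slot_vec_add_ball[OF \<open>k < n\<close>] E_def Y_def)
qed

lemma (in exp_moment_distribution) integral_Phi_add_ball_le:
  assumes M'': "\<forall>z. \<bar>z\<bar> < lam / 2 \<longrightarrow> deriv (deriv (mgf Wd)) z \<le> 2 * S"
    and mean: "(\<integral>\<omega>. \<omega> \<partial>Wd) = 1"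
    and a: "0 < a" "a \<le> lam / 2" and "S \<ge> 0"
    and k: "k < n" "Nw k > 0" and N: "total_slots n Nw > 0"
  shows "(\<integral>\<omega>. Phi a (slot_vec n Nw (add_ball w k \<omega>)) - Phi a (slot_vec n Nw w) \<partial>Wd)
    \<le> - (a / real (total_slots n Nw)) * (1 - S * a) * Phi a (slot_vec n Nw w)
      + a * (1 + S * a) * exp (a * normalized_value n Nw w k)"
proof -
  define P where "P = Phi a (slot_vec n Nw w)"
  define h where "h = a / real (total_slots n Nw)"
  define hk where "hk = a / real (Nw k)"
  define Z where "Z = exp (a * normalized_value n Nw w k)"
  define X where "X = real (Nw k) * Z"
  have "P \<ge> 0"
    unfolding P_def Phi_def by (intro sum_list_nonneg) auto
  have "X \<ge> 0"
    by (simp add: X_def Z_def)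
  have h: "0 < h" "h \<le> a"
    using a N by (simp_all add: h_def field_simps)
  have hk: "0 < hk" "hk \<le> a"
    using a k by (simp_all add: hk_def field_simps)
  have integrable: "integrable Wd (\<lambda>\<omega>. exp (c * \<omega>))" if "c \<le> a" for c
    using that a by (intro integrable_exp) auto
  have "(\<integral>\<omega>. Phi a (slot_vec n Nw (add_ball w k \<omega>)) - Phi a (slot_vec n Nw w) \<partial>Wd)
      \<le> (\<integral>\<omega>. (exp (- h * \<omega>) - 1) * P + X * (exp (hk * \<omega>) - 1) \<partial>Wd)"
  proof (rule integral_mono_AE)
    have "Phi a (slot_vec n Nw (add_ball w k \<omega>)) - Phi a (slot_vec n Nw w)
        = P * exp (- h * \<omega>) + X * exp ((hk - h) * \<omega>) - X * exp (- h * \<omega>) - P" for \<omega>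
      by (simp add: Phi_slot_vec_add_ball[OF k(1)] P_def h_def hk_def X_def Z_def
          left_diff_distrib exp_diff exp_minus field_simps)
    moreover have "integrable Wd (\<lambda>\<omega>. exp ((hk - h) * \<omega>))"
      using h hk by (intro integrable) auto
    moreover have "integrable Wd (\<lambda>\<omega>. exp (- h * \<omega>))"
      using h hk by (intro integrable) auto
    ultimately show "integrable Wd (\<lambda>\<omega>. Phi a (slot_vec n Nw (add_ball w k \<omega>)) - Phi a (slot_vec n Nw w))"
      by simp
    show "integrable Wd (\<lambda>\<omega>. (exp (- h * \<omega>) - 1) * P + X * (exp (hk * \<omega>) - 1))"
      using integrable[of "- h"] integrable[of hk] h hk by simp
    show "AE \<omega> in Wd. Phi a (slot_vec n Nw (add_ball w k \<omega>)) - Phi a (slot_vec n Nw w)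
        \<le> (exp (- h * \<omega>) - 1) * P + X * (exp (hk * \<omega>) - 1)"
      using nonneg by eventually_elim
        (use Phi_slot_vec_add_ball_le[OF k(1)] a in \<open>simp add: P_def h_def hk_def X_def Z_def\<close>)
  qed
  also have "\<dots> = (mgf Wd (- h) - 1) * P + X * (mgf Wd hk - 1)"
    using integrable[of "- h"] integrable[of hk] h hk by (simp add: mgf_def prob_space)
  also have "\<dots> \<le> (- h + S * h\<^sup>2) * P + X * (hk + S * hk\<^sup>2)"
    using mgf_le_quadratic[OF M'' mean, of h] mgf_le_quadratic[OF M'' mean, of hk] h hk a
      \<open>P \<ge> 0\<close> \<open>X \<ge> 0\<close>
    by (intro add_mono mult_left_mono mult_right_mono) auto
  also have "\<dots> \<le> - h * (1 - S * a) * P + a * (1 + S * a) * Z"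
  proof -
    have "h * h * (S * P) \<le> a * h * (S * P)"
      using h \<open>S \<ge> 0\<close> \<open>P \<ge> 0\<close> by (intro mult_right_mono) auto
    then have "S * h\<^sup>2 * P \<le> S * a * h * P"
      by (simp add: power2_eq_square algebra_simps)
    moreover have "X * (hk + S * hk\<^sup>2) = a * Z * (1 + S * a / real (Nw k))"
      using k by (simp add: X_def hk_def power2_eq_square field_simps)
    moreover have "a * Z * (1 + S * a / real (Nw k)) \<le> a * (1 + S * a) * Z"
    proof -
      have "S * a / real (Nw k) \<le> S * a"
        using k a \<open>S \<ge> 0\<close> by (intro divide_left_mono[of 1, simplified]) auto
      then have "a * Z * (1 + S * a / real (Nw k)) \<le> a * Z * (1 + S * a)"
        using a by (intro mult_left_mono) (auto simp: Z_def)
      then show ?thesis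
        by (simp add: mult_ac)
    qed
    ultimately show ?thesis
      by (simp add: algebra_simps)
  qed
  finally show ?thesis
    by (simp add: P_def h_def Z_def)
qed

section \<open>Sorted vectors summing to zero\<close>

lemma sorted_wrt_ge_nth_le:
  fixes xs :: "'a::order list"
  shows "sorted_wrt (\<ge>) xs \<Longrightarrow> i \<le> j \<Longrightarrow> j < length xs \<Longrightarrow> xs ! j \<le> xs ! i"
  by (cases "i = j") (auto simp: sorted_wrt_iff_nth_less)

lemma sum_lessThan_if_less:
  assumes "q \<le> L"
  shows "(\<Sum>j<L. if j < q then c else 0) = of_nat q * (c :: 'a::semiring_1)"
proof -
  have "{..<L} \<inter> {j. j < q} = {..<q}"
    using assms by auto
  then show ?thesis
    by (simp add: sum.If_cases)
qed

lemma sum_list_map_eq_sum_nth: "sum_list (map f xs) = (\<Sum>j<length xs. f (xs ! j))"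
  by (simp add: sum_list_sum_nth lessThan_atLeast0)

lemma length_filter_greater_nth_le:
  fixes xs :: "real list"
  assumes "sorted_wrt (\<ge>) xs" and "1 \<le> r" "r \<le> length xs"
  shows "length (filter (\<lambda>x. xs ! (r - 1) < x) xs) \<le> r - 1"
proof -
  have "{j. j < length xs \<and> xs ! (r - 1) < xs ! j} \<subseteq> {..<r - 1}"
    using sorted_wrt_ge_nth_le[OF assms(1), of "r - 1"] assms(2,3) by (auto simp: not_less[symmetric])
  then show ?thesis
    unfolding length_filter_conv_card by (metis card_lessThan card_mono finite_lessThan)
qed

text \<open>Splitting each term at the level \<open>z\<close> of the \<open>r\<close>-th largest entry, the \<open>r\<close> largest entries
  contribute at least \<open>exp (a z)\<close> each.\<close>

lemma sum_list_exp_ge_excess_plus_quantile: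
  fixes xs :: "real list"
  assumes "sorted_wrt (\<ge>) xs" and "1 \<le> r" "r \<le> length xs" and "a \<ge> 0"
  defines "z \<equiv> xs ! (r - 1)"
  shows "sum_list (map (\<lambda>x. exp (a * x)) xs)
    \<ge> sum_list (map (\<lambda>x. max 0 (exp (a * x) - exp (a * z))) xs) + real r * exp (a * z)"
proof -
  have "(\<Sum>j<length xs. if j < r then exp (a * z) else 0) \<le> (\<Sum>j<length xs. min (exp (a * xs ! j)) (exp (a * z)))"
  proof (rule sum_mono)
    fix j
    assume "j \<in> {..<length xs}"
    then have "j < r \<Longrightarrow> z \<le> xs ! j"
      using sorted_wrt_ge_nth_le[OF assms(1), of j "r - 1"] assms(3) by (simp add: z_def)
    then show "(if j < r then exp (a * z) else 0) \<le> min (exp (a * xs ! j)) (exp (a * z))"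
      using \<open>a \<ge> 0\<close> by (auto intro: mult_left_mono)
  qed
  also have "(\<Sum>j<length xs. if j < r then exp (a * z) else 0) = real r * exp (a * z)"
    using assms(3) by (rule sum_lessThan_if_less)
  finally have "real r * exp (a * z) \<le> (\<Sum>j<length xs. min (exp (a * xs ! j)) (exp (a * z)))" .
  moreover have "(\<Sum>j<length xs. exp (a * xs ! j))
      = (\<Sum>j<length xs. max 0 (exp (a * xs ! j) - exp (a * z)))
        + (\<Sum>j<length xs. min (exp (a * xs ! j)) (exp (a * z)))"
    by (subst sum.distrib[symmetric]) (intro sum.cong; auto)
  ultimately show ?thesis
    unfolding sum_list_map_eq_sum_nth by linarith
qed

lemma sum_exp_ge_card_mul_exp_mean:
  fixes u :: "'a \<Rightarrow> real"
  assumes "finite A" "A \<noteq> {}"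
  shows "(\<Sum>j\<in>A. exp (u j)) \<ge> real (card A) * exp ((\<Sum>j\<in>A. u j) / real (card A))"
proof -
  define c where "c = (\<Sum>j\<in>A. u j) / real (card A)"
  have "card A > 0"
    using assms by (simp add: card_gt_0_iff)
  have "(\<Sum>j\<in>A. exp c * (1 + (u j - c))) \<le> (\<Sum>j\<in>A. exp (u j))"
    using exp_ge_add_one_self[of "u _ - c"] by (intro sum_mono) (simp add: exp_diff field_simps)
  also have "(\<Sum>j\<in>A. exp c * (1 + (u j - c))) = exp c * (real (card A) + (\<Sum>j\<in>A. u j) - real (card A) * c)"
    by (simp add: sum_distrib_left[symmetric] sum.distrib sum_subtractf algebra_simps)
  also have "\<dots> = real (card A) * exp c"
    using \<open>card A > 0\<close> by (simp add: c_def)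
  finally show ?thesis
    by (simp add: c_def)
qed

text \<open>Since the entries sum to zero and the top \<open>m\<close> entries are positive, the mean of the bottom
  \<open>L - m\<close> entries is at most \<open>- r z / (L - m) \<le> - 2 z\<close>; Jensen's inequality does the rest.\<close>

lemma sum_list_exp_neg_ge:
  fixes xs :: "real list"
  assumes "sorted_wrt (\<ge>) xs" and "sum_list xs = 0"
    and "1 \<le> r" "r \<le> m" "m < length xs" and "2 * (length xs - m) \<le> r"
    and "xs ! (m - 1) > 0" and "a > 0"
  defines "z \<equiv> xs ! (r - 1)"
  shows "sum_list (map (\<lambda>x. exp (- a * x)) xs) \<ge> real (length xs - m) * exp (2 * a * z)"
proof -
  define L where "L = length xs"
  define k where "k = L - m"
  have "k > 0" "card {m..<L} = k"
    using assms(5) by (auto simp: k_def L_def)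
  have split: "(\<Sum>j<L. f j) = (\<Sum>j<m. f j) + (\<Sum>j\<in>{m..<L}. f j)" for f :: "nat \<Rightarrow> real"
    using assms(5) by (simp add: L_def lessThan_atLeast0 sum.atLeastLessThan_concat)
  have top_pos: "xs ! j > 0" if "j < m" for j
    using that assms(5) by (intro less_le_trans[OF assms(7) sorted_wrt_ge_nth_le[OF assms(1)]]) auto
  have "real r * z = (\<Sum>j<m. if j < r then z else 0)"
    using assms(4) by (simp add: sum_lessThan_if_less)
  also have "\<dots> \<le> (\<Sum>j<m. xs ! j)"
    using sorted_wrt_ge_nth_le[OF assms(1), of _ "r - 1"] top_pos assms(3-5)
    by (intro sum_mono) (auto simp: z_def less_imp_le)
  also have "\<dots> = - (\<Sum>j\<in>{m..<L}. xs ! j)"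
    using split[of "\<lambda>j. xs ! j"] assms(2) by (simp add: L_def sum_list_sum_nth lessThan_atLeast0)
  finally have "a * (real r * z) \<le> a * - (\<Sum>j\<in>{m..<L}. xs ! j)"
    using \<open>a > 0\<close> by (intro mult_left_mono) auto
  then have bottom_sum: "(\<Sum>j\<in>{m..<L}. - a * xs ! j) \<ge> a * real r * z"
    by (simp add: sum_distrib_left sum_negf)
  have "2 * a * z * real k \<le> a * real r * z"
    using assms(6) \<open>a > 0\<close> top_pos[of "r - 1"] assms(3,4)
    by (simp add: z_def k_def L_def mult_left_mono mult_right_mono flip: of_nat_le_iff)
  then have "2 * a * z \<le> (\<Sum>j\<in>{m..<L}. - a * xs ! j) / real k"
    using bottom_sum \<open>k > 0\<close> by (simp add: field_simps)
  then have "real k * exp (2 * a * z) \<le> real k * exp ((\<Sum>j\<in>{m..<L}. - a * xs ! j) / real k)"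
    by (intro mult_left_mono) auto
  also have "\<dots> \<le> (\<Sum>j\<in>{m..<L}. exp (- a * xs ! j))"
    using sum_exp_ge_card_mul_exp_mean[of "{m..<L}" "\<lambda>j. - a * xs ! j"] \<open>k > 0\<close>
    unfolding \<open>card {m..<L} = k\<close> by (simp add: k_def)
  also have "\<dots> \<le> sum_list (map (\<lambda>x. exp (- a * x)) xs)"
    using split[of "\<lambda>j. exp (- a * xs ! j)"] by (simp add: sum_list_map_eq_sum_nth L_def sum_nonneg)
  finally show ?thesis
    by (simp add: k_def L_def)
qed

lemma sorted_zero_sum_nth_pos_less_length:
  fixes xs :: "real list"
  assumes sorted: "sorted_wrt (\<ge>) xs" and "sum_list xs = 0"
    and "1 \<le> m" "m \<le> length xs" and "xs ! (m - 1) > 0"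
  shows "m < length xs"
proof (rule ccontr)
  assume "\<not> m < length xs"
  then have "m = length xs"
    using \<open>m \<le> length xs\<close> by simp
  then have "xs ! j > 0" if "j < length xs" for j
    using that \<open>m \<le> length xs\<close>
    by (intro less_le_trans[OF \<open>xs ! (m - 1) > 0\<close> sorted_wrt_ge_nth_le[OF sorted]]) auto
  then have "0 < sum_list xs"
    unfolding sum_list_sum_nth using \<open>1 \<le> m\<close> \<open>m = length xs\<close> by (intro sum_pos) auto
  with \<open>sum_list xs = 0\<close> show False
    by simp
qed

lemma sorted_zero_sum_quantile_bounds:
  fixes xs :: "real list" and a :: real
  assumes sorted: "sorted_wrt (\<ge>) xs" and sum_zero: "sum_list xs = 0" and "xs \<noteq> []"
    and pos: "xs ! (nat \<lceil>3 * real (length xs) / 4\<rceil> - 1) > 0" and "a > 0"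
  defines "z \<equiv> xs ! (nat \<lceil>real (length xs) / 2\<rceil> - 1)"
  shows "z > 0"
    and "Phi a xs \<ge> sum_list (map (\<lambda>x. max 0 (exp (a * x) - exp (a * z))) xs)
      + real (length xs) / 2 * exp (a * z)"
    and "Psi a xs \<ge> real (length xs) / 8 * (exp (a * z))\<^sup>2"
    and "real (length (filter (\<lambda>x. z < x) xs)) \<le> real (length xs) / 2"
proof -
  define L where "L = real (length xs)"
  define m where "m = nat \<lceil>3 * L / 4\<rceil>"
  define r where "r = nat \<lceil>L / 2\<rceil>"
  have "L \<ge> 1"
    using \<open>xs \<noteq> []\<close> by (simp add: L_def Suc_le_eq)
  have m: "3 * L / 4 \<le> real m" "real m < 3 * L / 4 + 1"
    using \<open>L \<ge> 1\<close> ceiling_correct[of "3 * L / 4"] by (simp_all add: m_def)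
  have r: "L / 2 \<le> real r" "real r < L / 2 + 1"
    using \<open>L \<ge> 1\<close> ceiling_correct[of "L / 2"] by (simp_all add: r_def)
  have "1 \<le> r" "r \<le> m" "m \<le> length xs"
    using m r \<open>L \<ge> 1\<close> by (simp_all add: L_def flip: of_nat_le_iff)
  have "xs ! (m - 1) > 0"
    using pos by (simp add: m_def L_def)
  then have "m < length xs"
    using sorted_zero_sum_nth_pos_less_length[OF sorted sum_zero] \<open>1 \<le> r\<close> \<open>r \<le> m\<close> \<open>m \<le> length xs\<close>
    by simp
  have "2 * (length xs - m) \<le> r"
    using m r \<open>m < length xs\<close> by (simp add: L_def of_nat_diff flip: of_nat_le_iff)
  have z: "z = xs ! (r - 1)"
    by (simp add: z_def r_def L_def)
  show "z > 0"
    unfolding z using \<open>r \<le> m\<close> \<open>m < length xs\<close>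
    by (intro less_le_trans[OF \<open>xs ! (m - 1) > 0\<close> sorted_wrt_ge_nth_le[OF sorted]]) auto
  have "r \<le> length xs"
    using \<open>r \<le> m\<close> \<open>m \<le> length xs\<close> by simp
  have "L / 2 * exp (a * z) \<le> real r * exp (a * z)"
    using r by (intro mult_right_mono) auto
  then show "Phi a xs \<ge> sum_list (map (\<lambda>x. max 0 (exp (a * x) - exp (a * z))) xs)
      + real (length xs) / 2 * exp (a * z)"
    using sum_list_exp_ge_excess_plus_quantile[OF sorted \<open>1 \<le> r\<close> \<open>r \<le> length xs\<close>, of a] \<open>a > 0\<close>
    unfolding Phi_def z L_def by linarith
  have "real (length xs) / 8 * (exp (a * z))\<^sup>2 = L / 8 * exp (2 * a * z)"
    using exp_of_nat_mult[of 2 "a * z"] by (simp add: L_def mult.assoc)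
  also have "\<dots> \<le> real (length xs - m) * exp (2 * a * z)"
    using m \<open>m < length xs\<close> by (intro mult_right_mono) (auto simp: L_def of_nat_diff)
  also have "\<dots> \<le> Psi a xs"
    using sum_list_exp_neg_ge[OF sorted sum_zero \<open>1 \<le> r\<close> \<open>r \<le> m\<close> \<open>m < length xs\<close>
        \<open>2 * (length xs - m) \<le> r\<close> \<open>xs ! (m - 1) > 0\<close> \<open>a > 0\<close>]
    unfolding Psi_def z .
  finally show "Psi a xs \<ge> real (length xs) / 8 * (exp (a * z))\<^sup>2" .
  have "length (filter (\<lambda>x. z < x) xs) \<le> r - 1"
    using length_filter_greater_nth_le[OF sorted \<open>1 \<le> r\<close> \<open>r \<le> length xs\<close>] by (simp add: z)
  moreover have "real (r - 1) \<le> L / 2"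
    using r \<open>1 \<le> r\<close> by (simp add: of_nat_diff)
  ultimately show "real (length (filter (\<lambda>x. z < x) xs)) \<le> real (length xs) / 2"
    unfolding L_def by (meson of_nat_le_iff order_trans)
qed

lemma slot_vec_quantile_bounds:
  fixes n :: nat and Nw :: "nat \<Rightarrow> nat" and w :: "nat \<Rightarrow> real" and a :: real
  assumes Nw: "\<forall>i<n. Nw i > 0" and N: "total_slots n Nw > 0" and "a > 0"
    and pos: "slot_entry (slot_vec n Nw w) (nat \<lceil>3 * real (total_slots n Nw) / 4\<rceil>) > 0"
  defines "xs \<equiv> slot_vec n Nw w" and "N \<equiv> real (total_slots n Nw)"
  defines "z \<equiv> xs ! (nat \<lceil>N / 2\<rceil> - 1)"
  shows "z > 0"
    and "Phi a xs \<ge> sum_list (map (\<lambda>x. max 0 (exp (a * x) - exp (a * z))) xs) + N / 2 * exp (a * z)"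
    and "Psi a xs \<ge> N / 8 * (exp (a * z))\<^sup>2"
    and "real (length (filter (\<lambda>x. z < x) xs)) \<le> N / 2"
proof -
  have "length xs = total_slots n Nw"
    by (simp add: xs_def length_slot_vec)
  then have L: "real (length xs) = N" and "xs \<noteq> []"
    using N by (auto simp: N_def)
  have "sorted_wrt (\<ge>) xs" "sum_list xs = 0"
    using sorted_slot_vec sum_list_slot_vec[OF Nw N] by (simp_all add: xs_def)
  moreover have "xs ! (nat \<lceil>3 * real (length xs) / 4\<rceil> - 1) > 0"
    using pos by (simp add: xs_def slot_entry_def length_slot_vec)
  ultimately show "z > 0"
    and "Phi a xs \<ge> sum_list (map (\<lambda>x. max 0 (exp (a * x) - exp (a * z))) xs) + N / 2 * exp (a * z)"
    and "Psi a xs \<ge> N / 8 * (exp (a * z))\<^sup>2"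
    and "real (length (filter (\<lambda>x. z < x) xs)) \<le> N / 2"
    using sorted_zero_sum_quantile_bounds[of xs a] \<open>xs \<noteq> []\<close> \<open>a > 0\<close>
    unfolding L unfolding z_def[symmetric] by blast+
qed

section \<open>Two choices\<close>

lemma biased_sum_pmf:
  assumes "biased n Nw D \<alpha> \<beta>"
  shows "(\<Sum>i<n. pmf D i) = 1"
  using assms by (intro sum_pmf_eq_1) (auto simp: biased_def)

lemma biased_sum_pmf_mult_le:
  assumes "biased n Nw D \<alpha> \<beta>" and "\<And>i. i < n \<Longrightarrow> f i \<ge> 0"
  shows "(\<Sum>i<n. pmf D i * f i) \<le> \<beta> / real (total_slots n Nw) * (\<Sum>i<n. real (Nw i) * f i)"
proof -
  have "(\<Sum>i<n. pmf D i * f i) \<le> (\<Sum>i<n. \<beta> * real (Nw i) / real (total_slots n Nw) * f i)"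
    using assms by (intro sum_mono mult_right_mono) (auto simp: biased_def)
  also have "\<dots> = \<beta> / real (total_slots n Nw) * (\<Sum>i<n. real (Nw i) * f i)"
    by (simp add: sum_distrib_left mult_ac)
  finally show ?thesis .
qed

lemma sum_list_map_indicator: "sum_list (map (\<lambda>x. if P x then 1 else 0) xs) = real (length (filter P xs))"
  by (induct xs) auto

text \<open>With two choices the ball lands above the level \<open>z\<close> only if both samples do.\<close>

lemma exp_normalized_value_allocate_le:
  fixes n :: nat and Nw :: "nat \<Rightarrow> nat" and w :: "nat \<Rightarrow> real" and a :: real
  assumes "a \<ge> 0"
  defines "y \<equiv> normalized_value n Nw w"
  shows "exp (a * y (allocate Nw w i j))
    \<le> exp (a * z) + max 0 (exp (a * y i) - exp (a * z)) * (if z < y j then 1 else 0)"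
proof -
  have "y (allocate Nw w i j) \<le> y i" "y (allocate Nw w i j) \<le> y j"
    by (auto simp: y_def allocate_def normalized_value_def)
  then have "exp (a * y (allocate Nw w i j)) \<le> exp (a * y i)"
    and "z \<ge> y j \<Longrightarrow> exp (a * y (allocate Nw w i j)) \<le> exp (a * z)"
    using \<open>a \<ge> 0\<close> by (auto intro: mult_left_mono)
  moreover have "exp (a * y i) - exp (a * z) \<le> max 0 (exp (a * y i) - exp (a * z))"
    by simp
  ultimately show ?thesis
    by (cases "z < y j") (simp_all del: exp_le_cancel_iff)
qed

lemma (in exp_moment_distribution) integral_Phi_add_ball_allocate_le:
  fixes n :: nat and Nw :: "nat \<Rightarrow> nat" and w :: "nat \<Rightarrow> real" and a z :: real
  assumes M'': "\<forall>z. \<bar>z\<bar> < lam / 2 \<longrightarrow> deriv (deriv (mgf Wd)) z \<le> 2 * S"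
    and mean: "(\<integral>\<omega>. \<omega> \<partial>Wd) = 1"
    and a: "0 < a" "a \<le> lam / 2" and "S \<ge> 0"
    and Nw: "\<forall>i<n. Nw i > 0" and N: "total_slots n Nw > 0" and "i < n" "j < n"
  defines "y \<equiv> normalized_value n Nw w"
  shows "(\<integral>\<omega>. Phi a (slot_vec n Nw (add_ball w (allocate Nw w i j) \<omega>)) - Phi a (slot_vec n Nw w) \<partial>Wd)
    \<le> - (a / real (total_slots n Nw)) * (1 - S * a) * Phi a (slot_vec n Nw w)
      + a * (1 + S * a) * (exp (a * z) + max 0 (exp (a * y i) - exp (a * z)) * (if z < y j then 1 else 0))"
proof -
  have k: "allocate Nw w i j < n" "Nw (allocate Nw w i j) > 0"
    using \<open>i < n\<close> \<open>j < n\<close> Nw by (auto simp: allocate_def)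
  have "a * (1 + S * a) * exp (a * y (allocate Nw w i j))
      \<le> a * (1 + S * a) * (exp (a * z) + max 0 (exp (a * y i) - exp (a * z)) * (if z < y j then 1 else 0))"
    using exp_normalized_value_allocate_le[of a n Nw w i j z] a \<open>S \<ge> 0\<close>
    by (intro mult_left_mono) (simp_all add: y_def)
  then show ?thesis
    using integral_Phi_add_ball_le[OF M'' mean a \<open>S \<ge> 0\<close> k N, of w]
    unfolding y_def by (meson add_left_mono order_trans)
qed

lemma biased_sum_pmf_above_le:
  fixes z \<beta> :: real
  assumes bias: "biased n Nw D \<alpha> \<beta>" and "\<beta> \<ge> 0" and N: "total_slots n Nw > 0"
    and few_above: "real (length (filter (\<lambda>x. z < x) (slot_vec n Nw w))) \<le> real (total_slots n Nw) / 2"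
  shows "(\<Sum>j<n. pmf D j * (if z < normalized_value n Nw w j then 1 else 0)) \<le> \<beta> / 2"
proof -
  define above where "above = (\<lambda>x. if z < x then 1 else 0 :: real)"
  have "real (length (filter (\<lambda>x. z < x) (slot_vec n Nw w))) = sum_list (map above (slot_vec n Nw w))"
    by (simp add: above_def sum_list_map_indicator)
  also have "\<dots> = (\<Sum>i<n. real (Nw i) * above (normalized_value n Nw w i))"
    by (rule sum_list_map_slot_vec)
  finally have "(\<Sum>j<n. pmf D j * above (normalized_value n Nw w j))
      \<le> \<beta> / real (total_slots n Nw) * real (length (filter (\<lambda>x. z < x) (slot_vec n Nw w)))"
    using biased_sum_pmf_mult_le[OF bias, of "\<lambda>j. above (normalized_value n Nw w j)"]
    by (simp add: above_def)
  also have "\<dots> \<le> \<beta> / real (total_slots n Nw) * (real (total_slots n Nw) / 2)"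
    using few_above \<open>\<beta> \<ge> 0\<close> by (intro mult_left_mono) auto
  finally show ?thesis
    using N by (simp add: above_def)
qed

lemma (in exp_moment_distribution) Phi_drift_le:
  fixes n :: nat and Nw :: "nat \<Rightarrow> nat" and w :: "nat \<Rightarrow> real" and a z :: real
  assumes M'': "\<forall>z. \<bar>z\<bar> < lam / 2 \<longrightarrow> deriv (deriv (mgf Wd)) z \<le> 2 * S"
    and mean: "(\<integral>\<omega>. \<omega> \<partial>Wd) = 1"
    and a: "0 < a" "a \<le> lam / 2" and "S \<ge> 0" and "\<beta> \<ge> 0"
    and Nw: "\<forall>i<n. Nw i > 0" and N: "total_slots n Nw > 0" and bias: "biased n Nw D \<alpha> \<beta>"
    and few_above: "real (length (filter (\<lambda>x. z < x) (slot_vec n Nw w))) \<le> real (total_slots n Nw) / 2"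
  defines "G \<equiv> sum_list (map (\<lambda>x. max 0 (exp (a * x) - exp (a * z))) (slot_vec n Nw w))"
  shows "Phi_drift a n Nw D Wd w
    \<le> - (a / real (total_slots n Nw)) * (1 - S * a) * Phi a (slot_vec n Nw w)
      + a * (1 + S * a) * (exp (a * z) + \<beta>\<^sup>2 / 2 * G / real (total_slots n Nw))"
proof -
  define N where "N = real (total_slots n Nw)"
  define y where "y = normalized_value n Nw w"
  define A where "A = - (a / N) * (1 - S * a) * Phi a (slot_vec n Nw w)"
  define B where "B = a * (1 + S * a)"
  define g where "g x = max 0 (exp (a * x) - exp (a * z))" for x
  define above where "above x = (if z < x then 1 else 0 :: real)" for x
  have "B \<ge> 0" "N > 0"
    using a \<open>S \<ge> 0\<close> N by (simp_all add: B_def N_def)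
  have "Phi_drift a n Nw D Wd w
      \<le> (\<Sum>i<n. \<Sum>j<n. pmf D i * pmf D j * (A + B * (exp (a * z) + g (y i) * above (y j))))"
    unfolding Phi_drift_def
    using integral_Phi_add_ball_allocate_le[OF M'' mean a \<open>S \<ge> 0\<close> Nw N, of _ _ w z]
    by (intro sum_mono mult_left_mono) (simp_all add: A_def B_def N_def y_def g_def above_def)
  also have "\<dots> = (A + B * exp (a * z)) * ((\<Sum>i<n. pmf D i) * (\<Sum>j<n. pmf D j))
      + B * ((\<Sum>i<n. pmf D i * g (y i)) * (\<Sum>j<n. pmf D j * above (y j)))"
    by (simp add: sum_product sum.distrib sum_distrib_left algebra_simps)
  also have "\<dots> = A + B * exp (a * z) + B * ((\<Sum>i<n. pmf D i * g (y i)) * (\<Sum>j<n. pmf D j * above (y j)))"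
    using biased_sum_pmf[OF bias] by simp
  also have "\<dots> \<le> A + B * exp (a * z) + B * (\<beta> * G / N * (\<beta> / 2))"
  proof -
    have "(\<Sum>i<n. pmf D i * g (y i)) \<le> \<beta> * G / N"
      using biased_sum_pmf_mult_le[OF bias, of "\<lambda>i. g (y i)"]
      by (simp add: g_def G_def N_def y_def sum_list_map_slot_vec)
    moreover have "(\<Sum>j<n. pmf D j * above (y j)) \<le> \<beta> / 2"
      using biased_sum_pmf_above_le[OF bias \<open>\<beta> \<ge> 0\<close> N few_above] by (simp add: above_def y_def)
    moreover have "0 \<le> (\<Sum>i<n. pmf D i * g (y i))" "0 \<le> (\<Sum>j<n. pmf D j * above (y j))"
      by (auto intro!: sum_nonneg simp: g_def above_def)
    ultimately show ?thesis
      using \<open>B \<ge> 0\<close> \<open>N > 0\<close> by (intro add_left_mono mult_left_mono mult_mono) auto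
  qed
  finally show ?thesis
    using \<open>N > 0\<close> by (simp add: A_def B_def N_def power2_eq_square algebra_simps)
qed

text \<open>Multiplying the two drift bounds by \<open>N / a\<close> and using \<open>G \<le> P - N Z / 2\<close> leaves
  \<open>(2/9) P \<le> (7/10) N Z\<close>.\<close>

lemma Phi_le_of_drift_bounds:
  fixes P G Z N a e d :: real
  assumes "N > 0" "a > 0" "0 \<le> e" "e \<le> 1 / 20" "Z > 0" "G \<ge> 0"
    and Phi_ge: "P \<ge> G + N / 2 * Z"
    and drift_le: "d \<le> - (a / N) * (1 - e) * P + a * (1 + e) * (Z + 2 / 3 * G / N)"
    and drift_ge: "- (1 / 36) * (a / N) * P \<le> d"
  shows "P \<le> 63 / 20 * (N * Z)"
proof -
  have "P \<ge> 0"
    using Phi_ge \<open>N > 0\<close> \<open>Z > 0\<close> \<open>G \<ge> 0\<close> by (smt (verit) mult_pos_pos half_gt_zero)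
  have "(a / N) * (- (1 / 36) * P) = - (1 / 36) * (a / N) * P"
    by simp
  also have "\<dots> \<le> d"
    by (fact drift_ge)
  also have "\<dots> \<le> - (a / N) * (1 - e) * P + a * (1 + e) * (Z + 2 / 3 * G / N)"
    by (fact drift_le)
  also have "\<dots> = (a / N) * (- (1 - e) * P + (1 + e) * (N * Z + 2 / 3 * G))"
    using \<open>N > 0\<close> by (simp add: field_simps)
  finally have "(a / N) * (- (1 / 36) * P) \<le> (a / N) * (- (1 - e) * P + (1 + e) * (N * Z + 2 / 3 * G))" .
  then have scaled: "- (1 / 36) * P \<le> - (1 - e) * P + (1 + e) * (N * Z + 2 / 3 * G)"
    by (rule mult_left_le_imp_le) (use \<open>N > 0\<close> \<open>a > 0\<close> in simp)
  have "(1 + e) * (N * Z + 2 / 3 * G) \<le> (1 + e) * (2 / 3 * (P + N * Z))"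
    using Phi_ge \<open>e \<ge> 0\<close> by (intro mult_left_mono) auto
  also have "\<dots> \<le> 21 / 20 * (2 / 3 * (P + N * Z))"
    using \<open>e \<le> 1 / 20\<close> \<open>P \<ge> 0\<close> \<open>N > 0\<close> \<open>Z > 0\<close> by (intro mult_right_mono) auto
  finally have "- (1 / 36) * P \<le> - (1 - e) * P + 7 / 10 * (P + N * Z)"
    using scaled by linarith
  moreover have "e * P \<le> 1 / 20 * P"
    using \<open>e \<le> 1 / 20\<close> \<open>P \<ge> 0\<close> by (intro mult_right_mono) auto
  moreover have "- (1 - e) * P = - P + e * P"
    by (simp add: algebra_simps)
  ultimately show ?thesis
    by argo
qed

definition Gamma_constant :: "real \<Rightarrow> real" where
  "Gamma_constant \<mu> = (1 + 32 / (3 * \<mu>)) * (63 / 20) * (1344 / (5 * \<mu>)) + 1"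

text \<open>\<open>Q \<ge> N Z\<^sup>2 / 8\<close> against \<open>Q \<le> (32 / 3\<mu>) P \<le> (32 / 3\<mu>) (63/20) N Z\<close> bounds \<open>Z\<close> by a constant.\<close>

lemma sum_lt_Gamma_constant:
  fixes P Q Z N \<mu> :: real
  assumes "N > 0" "\<mu> > 0" "Z > 0"
    and P_le: "P \<le> 63 / 20 * (N * Z)" and Q_ge: "Q \<ge> N / 8 * Z\<^sup>2" and P_ge: "P \<ge> 3 * \<mu> / 32 * Q"
  shows "P + Q < Gamma_constant \<mu> * N"
proof -
  have "N * Z > 0"
    using assms by simp
  have "N * Z * (3 * \<mu> / 256 * Z) = 3 * \<mu> / 32 * (N / 8 * Z\<^sup>2)"
    by (simp add: power2_eq_square)
  also have "\<dots> \<le> 3 * \<mu> / 32 * Q"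
    using Q_ge \<open>\<mu> > 0\<close> by (intro mult_left_mono) auto
  also have "\<dots> \<le> N * Z * (63 / 20)"
    using P_ge P_le by (simp add: mult_ac)
  finally have "3 * \<mu> / 256 * Z \<le> 63 / 20"
    by (rule mult_left_le_imp_le) (fact \<open>N * Z > 0\<close>)
  then have "Z \<le> 1344 / (5 * \<mu>)"
    using \<open>\<mu> > 0\<close> by (simp add: field_simps)
  then have "N * Z \<le> N * (1344 / (5 * \<mu>))"
    using \<open>N > 0\<close> by (intro mult_left_mono) auto
  then have P_bound: "P \<le> 63 / 20 * (1344 / (5 * \<mu>)) * N"
    using P_le by (simp add: mult_ac)
  have "Q \<le> 32 / (3 * \<mu>) * P"
    using P_ge \<open>\<mu> > 0\<close> by (simp add: field_simps)
  then have "P + Q \<le> (1 + 32 / (3 * \<mu>)) * P"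
    by (simp add: algebra_simps)
  also have "\<dots> \<le> (1 + 32 / (3 * \<mu>)) * (63 / 20 * (1344 / (5 * \<mu>)) * N)"
    using P_bound \<open>\<mu> > 0\<close> by (intro mult_left_mono) auto
  also have "\<dots> < (1 + 32 / (3 * \<mu>)) * (63 / 20 * (1344 / (5 * \<mu>)) * N) + N"
    using \<open>N > 0\<close> by simp
  also have "\<dots> = Gamma_constant \<mu> * N"
    unfolding Gamma_constant_def by (simp only: distrib_right mult.assoc mult_1_left)
  finally show ?thesis .
qed

lemma (in exp_moment_distribution) Phi_lt_or_Gamma_lt:
  fixes n :: nat and Nw :: "nat \<Rightarrow> nat" and w :: "nat \<Rightarrow> real" and a \<mu> \<beta> :: real
  assumes "\<mu> > 0" and a: "0 < a" "a \<le> lam / 2" and "S \<ge> 0" "S * a \<le> 1 / 20"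
    and "\<beta> \<ge> 0" "\<beta>\<^sup>2 \<le> 4 / 3" and "n > 0" and Nw: "\<forall>i<n. Nw i > 0" and bias: "biased n Nw D \<alpha> \<beta>"
    and M'': "\<forall>z. \<bar>z\<bar> < lam / 2 \<longrightarrow> deriv (deriv (mgf Wd)) z \<le> 2 * S"
    and mean: "(\<integral>\<omega>. \<omega> \<partial>Wd) = 1"
    and pos: "slot_entry (slot_vec n Nw w) (nat \<lceil>3 * real (total_slots n Nw) / 4\<rceil>) > 0"
    and drift_ge: "Phi_drift a n Nw D Wd w
      \<ge> - (1 / 36) * (a / real (total_slots n Nw)) * Phi a (slot_vec n Nw w)"
  shows "Phi a (slot_vec n Nw w) < 3 * \<mu> / 32 * Psi a (slot_vec n Nw w)
    \<or> Gamma a (slot_vec n Nw w) < Gamma_constant \<mu> * real (total_slots n Nw)"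
proof (cases "Phi a (slot_vec n Nw w) < 3 * \<mu> / 32 * Psi a (slot_vec n Nw w)")
  case False
  define xs where "xs = slot_vec n Nw w"
  define N where "N = real (total_slots n Nw)"
  define z where "z = xs ! (nat \<lceil>N / 2\<rceil> - 1)"
  define G where "G = sum_list (map (\<lambda>x. max 0 (exp (a * x) - exp (a * z))) xs)"
  have N_pos: "total_slots n Nw > 0"
    using \<open>n > 0\<close> Nw by (rule total_slots_pos)
  note quantiles = slot_vec_quantile_bounds[OF Nw N_pos \<open>a > 0\<close> pos,
      folded xs_def, folded N_def, folded z_def, folded G_def]
  have "N > 0" "G \<ge> 0"
    using N_pos by (auto simp: N_def G_def intro!: sum_list_nonneg)
  have "Phi_drift a n Nw D Wd w \<le> - (a / N) * (1 - S * a) * Phi a xs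
      + a * (1 + S * a) * (exp (a * z) + \<beta>\<^sup>2 / 2 * G / N)"
    using Phi_drift_le[where w = w and z = z, OF M'' mean a \<open>S \<ge> 0\<close> \<open>\<beta> \<ge> 0\<close> Nw N_pos bias]
      quantiles(4) by (simp add: xs_def N_def G_def)
  also have "\<dots> \<le> - (a / N) * (1 - S * a) * Phi a xs + a * (1 + S * a) * (exp (a * z) + 2 / 3 * G / N)"
    using \<open>\<beta>\<^sup>2 \<le> 4 / 3\<close> \<open>G \<ge> 0\<close> \<open>N > 0\<close> a \<open>S \<ge> 0\<close>
    by (intro add_left_mono mult_left_mono divide_right_mono mult_right_mono) auto
  finally have "Phi a xs \<le> 63 / 20 * (N * exp (a * z))"
    using Phi_le_of_drift_bounds[OF \<open>N > 0\<close> \<open>a > 0\<close> _ \<open>S * a \<le> 1 / 20\<close> exp_gt_zero \<open>G \<ge> 0\<close> quantiles(2)]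
      drift_ge \<open>S \<ge> 0\<close> \<open>a > 0\<close> by (simp add: xs_def N_def)
  moreover have "Phi a xs \<ge> 3 * \<mu> / 32 * Psi a xs"
    using False by (simp add: xs_def)
  ultimately have "Phi a xs + Psi a xs < Gamma_constant \<mu> * N"
    using sum_lt_Gamma_constant[OF \<open>N > 0\<close> \<open>\<mu> > 0\<close> exp_gt_zero _ quantiles(3)] by blast
  then show ?thesis
    by (simp add: Gamma_def xs_def N_def)
qed simp

theorem mainTheorem13:
  fixes \<mu> :: real
  assumes "\<mu> > 0"
  shows "\<exists>a0 :: real \<Rightarrow> real. (\<forall>S\<ge>1. a0 S > 0) \<and>
    (\<forall>a::real. a > 0 \<longrightarrow> (\<exists>c::real. \<forall>(S::real) (lam::real) (n::nat) (Nw::nat \<Rightarrow> nat)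
        (D::nat pmf) (\<alpha>::real) (\<beta>::real) (Wd::real measure) (w::nat \<Rightarrow> real).
      S \<ge> 1 \<and> lam > 0 \<and> a \<le> a0 S \<and> a \<le> lam / 2 \<and>
      n > 0 \<and> (\<forall>i<n. Nw i > 0) \<and>
      \<alpha> \<ge> 1 \<and> \<beta> \<ge> 1 \<and> \<beta>\<^sup>2 \<le> 4/3 - \<mu> \<and> biased n Nw D \<alpha> \<beta> \<and>
      prob_space Wd \<and> sets Wd = sets borel \<and> (AE \<omega> in Wd. \<omega> \<ge> 0) \<and>
      integrable Wd (\<lambda>\<omega>. \<omega>) \<and> (\<integral>\<omega>. \<omega> \<partial>Wd) = 1 \<and>
      integrable Wd (\<lambda>\<omega>. exp (lam * \<omega>)) \<and>
      (\<forall>z. \<bar>z\<bar> < lam / 2 \<longrightarrow> deriv (deriv (mgf Wd)) z \<le> 2 * S) \<and>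
      (\<forall>i<n. w i \<ge> 0) \<and>
      slot_entry (slot_vec n Nw w) (nat \<lceil>3 * real (total_slots n Nw) / 4\<rceil>) > 0 \<and>
      Phi_drift a n Nw D Wd w \<ge> - (1/36) * (a / real (total_slots n Nw)) * Phi a (slot_vec n Nw w)
      \<longrightarrow> Phi a (slot_vec n Nw w) < (3 * \<mu> / 32) * Psi a (slot_vec n Nw w) \<or>
          Gamma a (slot_vec n Nw w) < c * real (total_slots n Nw)))"
  apply (intro exI[of _ "\<lambda>S. 1 / (20 * S)"] exI[of _ "Gamma_constant \<mu>"] conjI allI impI)
  subgoal for S
    by simp
  subgoal for a S lam n Nw D \<alpha> \<beta> Wd w
  proof (elim conjE, rule exp_moment_distribution.Phi_lt_or_Gamma_lt[OF
        exp_moment_distribution.intro[OF _ exp_moment_distribution_axioms.intro] assms])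
    assume "1 \<le> S" "a \<le> 1 / (20 * S)" "1 \<le> \<beta>" "\<beta>\<^sup>2 \<le> 4 / 3 - \<mu>"
    then show "S * a \<le> 1 / 20" "0 \<le> S" "0 \<le> \<beta>" "\<beta>\<^sup>2 \<le> 4 / 3"
      using assms by (simp_all add: field_simps)
  qed assumption+
  done

end
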